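(* Let $D$ be a division ring, $n\ge 1$, $1\le k\le n$, and let $A=(a_{ij})\in\mathbb{M}_n(D)$ be a matrix all of whose rows other than the $k$-th row are zero. Then $A$ is a sum of two nilpotent matrices in $\mathbb{M}_n(D)$ if and only if $a_{kk}=0$.
   Context: $\mathbb{M}_n(D)$ denotes the ring of $n\times n$ matrices over the division ring $D$. *)

theory Defs
  imports "HOL-Analysis.Analysis"
begin

text \<open>Matrix powers with respect to the matrix product (note: the ring structure
  on vec types is componentwise, so we cannot use the generic power).\<close>
fun mat_pow :: "('a::semiring_1)^'n^'n \<Rightarrow> nat \<Rightarrow> 'a^'n^'n" where
  "mat_pow A 0 = mat 1"
| "mat_pow A (Suc m) = A ** mat_pow A m"

definition nilpotent_mat :: "('a::semiring_1)^'n^'n \<Rightarrow> bool" where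
  "nilpotent_mat A \<longleftrightarrow> (\<exists>m. mat_pow A m = 0)"

end

theory Submission
  imports Defs
begin

text \<open>Suppose \<open>A = B + C\<close> with \<open>B, C\<close> nilpotent and put \<open>N = -B\<close>, so \<open>C = A + N\<close>.
  Every row vector \<open>x\<close> satisfies \<open>x A = x(k) r\<close>, where \<open>r\<close> is the \<open>k\<close>-th row of \<open>A\<close>.
  Hence the \<open>k\<close>-th coordinates \<open>d(n)\<close> of \<open>r C\<^sup>n\<close> and \<open>c(n)\<close> of \<open>r N\<^sup>n\<close> satisfy
  \<open>d(n) = (\<Sum>i<n. d(i) c(n-1-i)) + c(n)\<close>, i.e. \<open>d = t d c + c\<close> as power series in \<open>t\<close>.
  Both series are polynomials by nilpotency. If \<open>c \<noteq> 0\<close> then also \<open>d \<noteq> 0\<close>, and since \<open>D\<close>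
  has no zero divisors, \<open>t d c\<close> has degree \<open>deg d + deg c + 1\<close>, larger than that of \<open>d - c\<close>.
  So \<open>c = 0\<close>, in particular \<open>a\<^sub>k\<^sub>k = c(0) = 0\<close>. Conversely, if \<open>a\<^sub>k\<^sub>k = 0\<close> then
  \<open>A\<^sup>2 = 0\<close> and \<open>A = A + 0\<close>.\<close>

lemma mat_pow_add: "mat_pow X (m + n) = mat_pow X m ** mat_pow X n"
  by (induction m) (simp_all add: matrix_mul_assoc)

lemma mat_pow_Suc_right: "mat_pow X (Suc n) = mat_pow X n ** X"
  using mat_pow_add[of X n 1] by simp

lemma matrix_mul_uminus_left: "(- X) ** (Y :: 'a::ring_1^'n^'m) = - (X ** Y)"
  by (simp add: matrix_matrix_mult_def vec_eq_iff sum_negf)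

lemma matrix_mul_uminus_right: "X ** (- Y :: 'a::ring_1^'n^'m) = - (X ** Y)"
  by (simp add: matrix_matrix_mult_def vec_eq_iff sum_negf)

lemma mat_pow_uminus:
  "mat_pow (- X :: 'a::ring_1^'n^'n) n = (if even n then mat_pow X n else - mat_pow X n)"
  by (induction n) (simp_all add: matrix_mul_uminus_left matrix_mul_uminus_right)

lemma nilpotent_mat_uminus: "nilpotent_mat (- X :: 'a::ring_1^'n^'n) \<longleftrightarrow> nilpotent_mat X"
  unfolding nilpotent_mat_def mat_pow_uminus by (metis neg_equal_0_iff_equal)

lemma nilpotent_mat_finite_nonzero_powers:
  assumes "nilpotent_mat X"
  shows "finite {n. mat_pow X n \<noteq> 0}"
proof -
  obtain m where "mat_pow X m = 0"
    using assms unfolding nilpotent_mat_def by blast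
  then have "mat_pow X n = 0" if "m \<le> n" for n
    using mat_pow_add[of X "n - m" m] that by simp
  then have "{n. mat_pow X n \<noteq> 0} \<subseteq> {..<m}"
    by (auto simp: not_less[symmetric])
  then show ?thesis
    using finite_subset by blast
qed

lemma vector_matrix_left_sum:
  fixes M :: "'a::semiring_1^'n^'m"
  shows "(\<Sum>i\<in>I. f i) v* M = (\<Sum>i\<in>I. f i v* M)"
  by (induction I rule: infinite_finite_induct) (simp_all add: vector_matrix_left_distrib)

lemma scalar_vector_matrix_assoc':
  fixes M :: "'a::semiring_1^'n^'m"
  shows "(c *s x) v* M = c *s (x v* M)"
  by (simp add: vector_matrix_mult_def vec_eq_iff sum_distrib_left mult.assoc)

lemma vector_matrix_mult_single_row:
  fixes A :: "'a::semiring_1^'n^'m"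
  assumes "\<forall>i. i \<noteq> k \<longrightarrow> A $ i = 0"
  shows "x v* A = x $ k *s A $ k"
proof -
  have "(\<Sum>i\<in>UNIV. x $ i * A $ i $ j) = x $ k * A $ k $ j" for j
    using assms by (subst sum.remove[of _ k]) (auto intro: sum.neutral)
  then show ?thesis
    by (simp add: vector_matrix_mult_def vec_eq_iff)
qed

lemma single_row_matrix_mul_self_eq_0:
  fixes A :: "'a::semiring_1^'n^'n"
  assumes "\<forall>i. i \<noteq> k \<longrightarrow> A $ i = 0" and "A $ k $ k = 0"
  shows "A ** A = 0"
proof -
  have "(A ** A) $ i = A $ i v* A" for i
    by (simp add: matrix_matrix_mult_def vector_matrix_mult_def)
  then show ?thesis
    using assms by (simp add: vector_matrix_mult_single_row vec_eq_iff) (metis mult_zero_left)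
qed

lemma vector_matrix_mult_mat_pow_single_row_add:
  fixes A N :: "'a::semiring_1^'n^'n" and v :: "'a^'n"
  assumes row: "\<forall>i. i \<noteq> k \<longrightarrow> A $ i = 0"
  defines "x i \<equiv> v v* mat_pow (A + N) i"
  shows "x n = (\<Sum>i<n. x i $ k *s (A $ k v* mat_pow N (n - 1 - i))) + v v* mat_pow N n"
proof (induction n)
  case 0
  show ?case by (simp add: x_def)
next
  case (Suc n)
  have "x (Suc n) = x n v* A + x n v* N"
    by (simp only: x_def mat_pow_Suc_right vector_matrix_mul_assoc[symmetric]
        vector_matrix_mult_add_rdistrib)
  also have "x n v* A = x n $ k *s (A $ k v* mat_pow N (Suc n - 1 - n))"
    using vector_matrix_mult_single_row[OF row] by simp
  also have "x n v* N =
      (\<Sum>i<n. x i $ k *s (A $ k v* mat_pow N (Suc n - 1 - i))) + v v* mat_pow N (Suc n)"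
  proof -
    have "mat_pow N (n - 1 - i) ** N = mat_pow N (Suc n - 1 - i)" if "i < n" for i
      using that by (simp add: mat_pow_Suc_right[symmetric] Suc_diff_Suc)
    then show ?thesis
      unfolding Suc.IH
      by (simp del: mat_pow.simps add: vector_matrix_left_distrib vector_matrix_left_sum
          scalar_vector_matrix_assoc' vector_matrix_mul_assoc mat_pow_Suc_right[symmetric])
  qed
  finally show ?case
    by (simp add: ac_simps)
qed

lemma obtain_last_nonzero:
  fixes f :: "nat \<Rightarrow> 'a::zero"
  assumes "finite {j. f j \<noteq> 0}" and "f j \<noteq> 0"
  obtains p where "f p \<noteq> 0" and "\<And>i. p < i \<Longrightarrow> f i = 0"
proof
  show "f (Max {j. f j \<noteq> 0}) \<noteq> 0"
    using Max_in[OF assms(1)] assms(2) by auto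
  show "f i = 0" if "Max {j. f j \<noteq> 0} < i" for i
    using Max_ge[OF assms(1), of i] that by force
qed

lemma finite_support_convolution_recurrence_imp_zero:
  fixes c d :: "nat \<Rightarrow> 'a::semiring_no_zero_divisors"
  assumes fin_c: "finite {j. c j \<noteq> 0}" and fin_d: "finite {j. d j \<noteq> 0}"
    and rec: "\<And>n. d n = (\<Sum>i<n. d i * c (n - 1 - i)) + c n"
  shows "c j = 0"
proof (rule ccontr)
  assume "c j \<noteq> 0"
  then obtain p where cp: "c p \<noteq> 0" and c_above: "\<And>i. p < i \<Longrightarrow> c i = 0"
    using obtain_last_nonzero[OF fin_c] by blast
  have "\<exists>i. d i \<noteq> 0"
  proof (rule ccontr)
    assume "\<nexists>i. d i \<noteq> 0"
    then show False
      using rec[of p] cp by simp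
  qed
  then obtain q where dq: "d q \<noteq> 0" and d_above: "\<And>i. q < i \<Longrightarrow> d i = 0"
    using obtain_last_nonzero[OF fin_d] by blast
  define n where "n = p + q + 1"
  have "(\<Sum>i\<in>{..<n} - {q}. d i * c (n - 1 - i)) = 0"
  proof (rule sum.neutral, rule ballI)
    show "d i * c (n - 1 - i) = 0" if "i \<in> {..<n} - {q}" for i
      using that c_above d_above unfolding n_def by (cases "q < i") auto
  qed
  then have "(\<Sum>i<n. d i * c (n - 1 - i)) = d q * c p"
    by (subst sum.remove[of _ q]) (auto simp: n_def)
  then have "d q * c p = 0"
    using rec[of n] c_above d_above by (simp add: n_def)
  then show False
    using cp dq by simp
qed

theorem lemma3p7:
  fixes A :: "('a::division_ring)^'n^'n" and k :: 'n
  assumes "\<forall>i. i \<noteq> k \<longrightarrow> A $ i = 0"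
  shows "(\<exists>B C. nilpotent_mat B \<and> nilpotent_mat C \<and> A = B + C) \<longleftrightarrow> A $ k $ k = 0"
proof
  assume "\<exists>B C. nilpotent_mat B \<and> nilpotent_mat C \<and> A = B + C"
  then obtain N C where N: "nilpotent_mat N" and C: "nilpotent_mat C" and CAN: "C = A + N"
    by (metis add.commute add_diff_cancel diff_conv_add_uminus nilpotent_mat_uminus)
  define d where "d i = (A $ k v* mat_pow C i) $ k" for i
  define c where "c j = (A $ k v* mat_pow N j) $ k" for j
  have "finite {j. c j \<noteq> 0}"
    using nilpotent_mat_finite_nonzero_powers[OF N] by (rule rev_finite_subset) (auto simp: c_def)
  moreover have "finite {i. d i \<noteq> 0}"
    using nilpotent_mat_finite_nonzero_powers[OF C] by (rule rev_finite_subset) (auto simp: d_def)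
  moreover have "d n = (\<Sum>i<n. d i * c (n - 1 - i)) + c n" for n
    using arg_cong[OF vector_matrix_mult_mat_pow_single_row_add[OF assms, of "A $ k" N n],
        of "\<lambda>w. w $ k"]
    unfolding d_def c_def CAN by (simp add: sum_component)
  ultimately have "c 0 = 0"
    by (rule finite_support_convolution_recurrence_imp_zero)
  then show "A $ k $ k = 0"
    by (simp add: c_def)
next
  assume "A $ k $ k = 0"
  then have "mat_pow A 2 = 0"
    using single_row_matrix_mul_self_eq_0[OF assms] by (simp add: numeral_2_eq_2)
  moreover have "mat_pow (0 :: 'a^'n^'n) 1 = 0"
    by (simp add: matrix_matrix_mult_def vec_eq_iff)
  ultimately have "nilpotent_mat A" and "nilpotent_mat (0 :: 'a^'n^'n)"
    unfolding nilpotent_mat_def by blast+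
  then show "\<exists>B C. nilpotent_mat B \<and> nilpotent_mat C \<and> A = B + C"
    by force
qed

end
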